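(* For each positive integer $n$ there is a multiplicative function $f_n$ from the positive integers to the positive integers, with $f_n(p^{k-1})\le f_n(p^k)$ for all primes $p$ and integers $k\ge1$, such that the set of $f_n$-practical numbers has asymptotic density $1-\varphi(n)/n$.
   Context: $\varphi$ is Euler's totient function. $f$ multiplicative means $f(1)=1$ and $f(ab)=f(a)f(b)$ for coprime $a,b$. $S_f(N)=\sum_{d\mid N} f(d)$. A positive integer $N$ is $f$-practical if every positive integer $m\le S_f(N)$ equals $\sum_{d\in\mathcal{D}}f(d)$ for some set $\mathcal{D}$ of distinct divisors of $N$. *)

theory Defs
  imports "HOL-Number_Theory.Number_Theory"
begin

definition multiplicative_fun :: "(nat \<Rightarrow> nat) \<Rightarrow> bool" where
  "multiplicative_fun f \<longleftrightarrow> f 1 = 1 \<and>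
     (\<forall>a b. a > 0 \<longrightarrow> b > 0 \<longrightarrow> coprime a b \<longrightarrow> f (a * b) = f a * f b)"

definition S_f :: "(nat \<Rightarrow> nat) \<Rightarrow> nat \<Rightarrow> nat" where
  "S_f f N = (\<Sum>d\<in>{d. d dvd N}. f d)"

definition f_practical :: "(nat \<Rightarrow> nat) \<Rightarrow> nat \<Rightarrow> bool" where
  "f_practical f N \<longleftrightarrow> N > 0 \<and>
     (\<forall>m. 1 \<le> m \<and> m \<le> S_f f N \<longrightarrow>
        (\<exists>D. D \<subseteq> {d. d dvd N} \<and> m = (\<Sum>d\<in>D. f d)))"

definition has_density :: "nat set \<Rightarrow> real \<Rightarrow> bool" where
  "has_density A \<delta> \<longleftrightarrow>
     (\<lambda>x. real (card (A \<inter> {1..x})) / real x) \<longlonglongrightarrow> \<delta>"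

end

theory Submission
  imports Defs
begin

text \<open>
  Take \<open>f\<^sub>n(x) = 3\<^sup>k\<close>, where \<open>k\<close> counts the prime factors of \<open>x\<close> not dividing \<open>n\<close>, so that
  \<open>f\<^sub>n(p\<^sup>e) = 1\<close> for \<open>p | n\<close> and \<open>3\<close> otherwise. If \<open>N > 1\<close> is coprime to \<open>n\<close>, every divisor
  except \<open>1\<close> has weight at least \<open>3\<close>, so \<open>2\<close> is no subset sum although the divisor sum is at
  least \<open>4\<close>. If a prime \<open>p\<close> divides both \<open>N\<close> and \<open>n\<close>, build \<open>N\<close> up from its part made of primes
  dividing \<open>n\<close> (all weights \<open>1\<close>, at least two divisors) by multiplying in one power of a new
  prime at a time: the divisors gained carry exactly three times the weights of old divisors,
  and a set of weights representing every integer up to its sum \<open>\<ge> 2\<close> keeps this property when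
  a tripled copy of such a set is adjoined. So the \<open>f\<^sub>n\<close>-practical numbers are \<open>1\<close> and the
  integers not coprime to \<open>n\<close>, which by periodicity have density \<open>1 - \<phi>(n)/n\<close>.
\<close>

definition f_n :: "nat \<Rightarrow> nat \<Rightarrow> nat" where
  "f_n n x = 3 ^ card {q \<in> prime_factors x. \<not> q dvd n}"

lemma f_n_1 [simp]: "f_n n 1 = 1"
  by (simp add: f_n_def)

lemma f_n_mult:
  assumes "a > 0" "b > 0" "coprime a b"
  shows "f_n n (a * b) = f_n n a * f_n n b"
proof -
  have disjoint: "prime_factors a \<inter> prime_factors b = {}"
    using assms(3) by (auto simp: in_prime_factors_iff dest: coprime_common_divisor)
  have "{q \<in> prime_factors (a * b). \<not> q dvd n} =
        {q \<in> prime_factors a. \<not> q dvd n} \<union> {q \<in> prime_factors b. \<not> q dvd n}"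
    using assms(1,2) by (auto simp: prime_factors_product)
  moreover have "card \<dots> = card {q \<in> prime_factors a. \<not> q dvd n} + card {q \<in> prime_factors b. \<not> q dvd n}"
    using disjoint by (intro card_Un_disjoint) auto
  ultimately show ?thesis
    by (simp add: f_n_def power_add)
qed

lemma f_n_prime_power:
  assumes "prime q" "k > 0"
  shows "f_n n (q ^ k) = (if q dvd n then 1 else 3)"
proof -
  have "{p \<in> prime_factors (q ^ k). \<not> p dvd n} = (if q dvd n then {} else {q})"
    using assms by (auto simp: prime_factors_power prime_prime_factors)
  then show ?thesis by (simp add: f_n_def)
qed

lemma f_n_prime_power_mono:
  assumes "prime p" "k \<ge> 1"
  shows "f_n n (p ^ (k - 1)) \<le> f_n n (p ^ k)"
proof (cases "k = 1")
  case True
  then show ?thesis using f_n_1[of n] f_n_prime_power[OF assms(1), of 1 n] by simp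
qed (use assms f_n_prime_power in simp)

lemma f_n_eq_1_iff: "f_n n x = 1 \<longleftrightarrow> (\<forall>q \<in> prime_factors x. q dvd n)"
  by (auto simp: f_n_def)

lemma f_n_eq_1_or_ge_3: "f_n n x = 1 \<or> f_n n x \<ge> 3"
  by (cases "card {q \<in> prime_factors x. \<not> q dvd n}") (auto simp: f_n_def)

definition subset_sum_complete :: "('a \<Rightarrow> nat) \<Rightarrow> 'a set \<Rightarrow> bool" where
  "subset_sum_complete f X \<longleftrightarrow> (\<forall>m \<le> sum f X. \<exists>D \<subseteq> X. sum f D = m)"

lemma subset_sum_complete_if_all_1:
  assumes "finite X" "\<And>x. x \<in> X \<Longrightarrow> f x = 1"
  shows "subset_sum_complete f X"
  unfolding subset_sum_complete_def
proof (intro allI impI)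
  fix m assume "m \<le> sum f X"
  then obtain D where D: "D \<subseteq> X" "card D = m"
    using assms by (auto intro: obtain_subset_with_card_n)
  then have "sum f D = m"
    using assms(2) by (simp add: subset_iff)
  with D show "\<exists>D \<subseteq> X. sum f D = m" by blast
qed

lemma subset_sum_complete_Un_scaled:
  assumes "finite X" "finite Z" "subset_sum_complete f X" "subset_sum_complete f Z"
    and "c > 0" "c - 1 \<le> sum f X"
    and "inj_on h Z" "\<And>z. z \<in> Z \<Longrightarrow> f (h z) = c * f z" "X \<inter> h ` Z = {}"
  shows "subset_sum_complete f (X \<union> h ` Z)"
  unfolding subset_sum_complete_def
proof (intro allI impI)
  have sum_image: "sum f (h ` D) = c * sum f D" if "D \<subseteq> Z" for D
  proof -
    have "sum f (h ` D) = sum (f \<circ> h) D"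
      using assms(7) that by (intro sum.reindex) (rule inj_on_subset)
    also have "\<dots> = c * sum f D"
      using assms(8) that by (auto simp: sum_distrib_left intro: sum.cong)
    finally show ?thesis .
  qed
  fix m assume m: "m \<le> sum f (X \<union> h ` Z)"
  then have m_le: "m \<le> sum f X + c * sum f Z"
    using assms(1,2,9) by (simp add: sum.union_disjoint sum_image)
  \<comment> \<open>Take as many multiples of \<open>c\<close> from \<open>h ` Z\<close> as possible; the rest fits into \<open>X\<close>.\<close>
  define t where "t = min (sum f Z) (m div c)"
  define r where "r = m - c * t"
  have "r \<le> sum f X"
  proof (cases "t = sum f Z")
    case False
    then have "r = m mod c" by (simp add: t_def r_def min_def minus_mult_div_eq_mod split: if_splits)
    moreover have "m mod c < c" using assms(5) by simp
    ultimately show ?thesis using assms(6) by linarith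
  qed (use m_le in \<open>simp add: r_def\<close>)
  then obtain D1 where D1: "D1 \<subseteq> X" "sum f D1 = r"
    using assms(3) unfolding subset_sum_complete_def by blast
  obtain D2 where D2: "D2 \<subseteq> Z" "sum f D2 = t"
    using assms(4) unfolding subset_sum_complete_def t_def by (meson min.cobounded1)
  have "c * t \<le> m"
    using times_div_less_eq_dividend[of c m] unfolding t_def by (meson le_trans min.cobounded2 mult_le_mono2)
  have "sum f (D1 \<union> h ` D2) = r + c * t"
    using D1 D2 assms(1,2,9) sum_image[OF D2(1)]
    by (subst sum.union_disjoint) (auto intro: finite_subset)
  also have "\<dots> = m"
    using \<open>c * t \<le> m\<close> by (simp add: r_def)
  finally have "sum f (D1 \<union> h ` D2) = m" .
  moreover have "D1 \<union> h ` D2 \<subseteq> X \<union> h ` Z"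
    using D1(1) D2(1) by auto
  ultimately show "\<exists>D \<subseteq> X \<union> h ` Z. sum f D = m"
    by blast
qed

lemma divisors_mult_prime_power_Suc:
  fixes y q :: nat
  assumes "prime q" "\<not> q dvd y"
  shows "{d. d dvd y * q ^ Suc e} = {d. d dvd y * q ^ e} \<union> (\<lambda>d. d * q ^ Suc e) ` {d. d dvd y}"
    and "{d. d dvd y * q ^ e} \<inter> (\<lambda>d. d * q ^ Suc e) ` {d. d dvd y} = {}"
proof -
  show "{d. d dvd y * q ^ Suc e} = {d. d dvd y * q ^ e} \<union> (\<lambda>d. d * q ^ Suc e) ` {d. d dvd y}"
  proof (intro equalityI subsetI)
    fix d assume "d \<in> {d. d dvd y * q ^ Suc e}"
    then obtain a b where ab: "d = a * b" "a dvd y" "b dvd q ^ Suc e"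
      using division_decomp[of d y "q ^ Suc e"] by blast
    obtain j where j: "j \<le> Suc e" "b = q ^ j"
      using ab(3) divides_primepow_nat[OF assms(1)] by blast
    have d: "d = a * q ^ j" "a dvd y" "j \<le> Suc e"
      using ab j by simp_all
    show "d \<in> {d. d dvd y * q ^ e} \<union> (\<lambda>d. d * q ^ Suc e) ` {d. d dvd y}"
    proof (cases "j \<le> e")
      case True
      then have "d dvd y * q ^ e" using d by (simp add: mult_dvd_mono le_imp_power_dvd)
      then show ?thesis by simp
    next
      case False
      with d show ?thesis by (auto simp: le_Suc_eq)
    qed
  next
    fix d assume "d \<in> {d. d dvd y * q ^ e} \<union> (\<lambda>d. d * q ^ Suc e) ` {d. d dvd y}"
    moreover have "y * q ^ e dvd y * q ^ Suc e" by simp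
    ultimately show "d \<in> {d. d dvd y * q ^ Suc e}"
      by (auto intro: dvd_trans mult_dvd_mono simp del: power_Suc)
  qed
  show "{d. d dvd y * q ^ e} \<inter> (\<lambda>d. d * q ^ Suc e) ` {d. d dvd y} = {}"
  proof (rule ccontr)
    assume "\<not> ?thesis"
    then obtain d where "d * q ^ Suc e dvd y * q ^ e" by blast
    then have "q ^ Suc e dvd y * q ^ e" by (rule dvd_mult_right)
    then have "q * q ^ e dvd y * q ^ e" by simp
    then have "q dvd y" using assms(1) by (simp add: prime_gt_0_nat)
    with assms(2) show False ..
  qed
qed

lemma sum_divisors_ge_2:
  fixes f :: "nat \<Rightarrow> nat"
  assumes "N > 0" "p dvd N" "p \<noteq> 1" "f 1 + f p \<ge> 2"
  shows "2 \<le> sum f {d. d dvd N}"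
proof -
  have "sum f {1, p} \<le> sum f {d. d dvd N}"
    using assms(1,2) by (intro sum_mono2) auto
  with assms(3,4) show ?thesis by simp
qed

lemma subset_sum_complete_divisors_mult_prime_power:
  fixes y q :: nat
  assumes "y > 0" "prime q" "\<not> q dvd n" "\<not> q dvd y"
    and "subset_sum_complete (f_n n) {d. d dvd y}" "2 \<le> sum (f_n n) {d. d dvd y}"
  shows "subset_sum_complete (f_n n) {d. d dvd y * q ^ e}"
proof (induction e)
  case (Suc e)
  have "subset_sum_complete (f_n n) ({d. d dvd y * q ^ e} \<union> (\<lambda>d. d * q ^ Suc e) ` {d. d dvd y})"
  proof (rule subset_sum_complete_Un_scaled[where c = 3])
    have "sum (f_n n) {d. d dvd y} \<le> sum (f_n n) {d. d dvd y * q ^ e}"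
      using assms(1,2) by (intro sum_mono2) (auto simp: prime_gt_0_nat)
    with assms(6) show "3 - 1 \<le> sum (f_n n) {d. d dvd y * q ^ e}" by simp
    show "inj_on (\<lambda>d. d * q ^ Suc e) {d. d dvd y}"
      using assms(2) by (auto simp: inj_on_def prime_gt_0_nat)
    show "f_n n (z * q ^ Suc e) = 3 * f_n n z" if "z \<in> {d. d dvd y}" for z
    proof -
      have "\<not> q dvd z" using that assms(4) by (auto dest: dvd_trans)
      then have "coprime z (q ^ Suc e)"
        using assms(2) by (simp add: prime_imp_coprime coprime_commute)
      then have "f_n n (z * q ^ Suc e) = f_n n z * f_n n (q ^ Suc e)"
        using that assms(1,2) by (intro f_n_mult) (auto simp: prime_gt_0_nat intro: Nat.gr0I)
      then show ?thesis using assms(2,3) f_n_prime_power[of q "Suc e" n] by simp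
    qed
  qed (use Suc.IH assms(1,2,5) divisors_mult_prime_power_Suc(2)[OF assms(2,4)] in
       \<open>auto simp: prime_gt_0_nat\<close>)
  then show ?case
    unfolding divisors_mult_prime_power_Suc(1)[OF assms(2,4)] .
qed (use assms(5) in simp)

lemma subset_sum_complete_divisors:
  assumes "prime p" "p dvd n" "N > 0" "p dvd N"
  shows "subset_sum_complete (f_n n) {d. d dvd N}"
  using assms(3,4)
proof (induction N rule: less_induct)
  case (less N)
  show ?case
  proof (cases "\<exists>q \<in> prime_factors N. \<not> q dvd n")
    case True
    then obtain q where q: "prime q" "q dvd N" "\<not> q dvd n" by auto
    obtain K where K: "N = K * q ^ multiplicity q N" "\<not> q dvd K"
      using multiplicity_decompose'[of N q] less.prems(1) q(1)
      by (metis mult.commute not_gr0 not_prime_unit)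
    have "multiplicity q N > 0"
      using q less.prems(1) by (simp add: prime_multiplicity_gt_zero_iff)
    then have "q ^ multiplicity q N > 1"
      using q(1) by (intro one_less_power) (auto simp: prime_gt_Suc_0_nat)
    moreover have "K > 0" using K(1) less.prems(1) by (auto intro: Nat.gr0I)
    ultimately have "K < N" using K(1) by (metis One_nat_def n_less_n_mult_m)
    have "p \<noteq> q" using assms(2) q(3) by blast
    then have "p dvd K"
      using K(1) less.prems(2) assms(1) q(1)
      by (metis prime_dvd_mult_iff prime_dvd_power primes_dvd_imp_eq)
    have "subset_sum_complete (f_n n) {d. d dvd K}"
      using less.IH[OF \<open>K < N\<close> \<open>K > 0\<close> \<open>p dvd K\<close>] .
    moreover have "2 \<le> sum (f_n n) {d. d dvd K}"
    proof (rule sum_divisors_ge_2)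
      show "f_n n 1 + f_n n p \<ge> 2" using f_n_1[of n] f_n_prime_power[of p 1 n] assms(1,2) by simp
    qed (use \<open>K > 0\<close> \<open>p dvd K\<close> assms(1) in auto)
    ultimately show ?thesis
      using subset_sum_complete_divisors_mult_prime_power[OF \<open>K > 0\<close> q(1,3) K(2)] K(1) by metis
  next
    case False
    have "f_n n d = 1" if "d dvd N" for d
    proof -
      have "prime_factors d \<subseteq> prime_factors N"
        using that less.prems(1) by (intro dvd_prime_factors) auto
      with False show ?thesis unfolding f_n_eq_1_iff by blast
    qed
    then show ?thesis
      using less.prems(1) by (intro subset_sum_complete_if_all_1) auto
  qed
qed

lemma f_practical_1: "f 1 = 1 \<Longrightarrow> f_practical f 1"
  by (auto simp: f_practical_def S_f_def intro: exI[of _ "{1}"])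

lemma f_practical_f_n_if_not_coprime:
  assumes "N > 0" "\<not> coprime N n"
  shows "f_practical (f_n n) N"
proof -
  have "gcd N n \<noteq> 1"
    using assms(2) coprime_iff_gcd_eq_1 by blast
  then obtain p where p: "prime p" "p dvd gcd N n"
    using prime_factor_nat by blast
  then have "subset_sum_complete (f_n n) {d. d dvd N}"
    using assms(1) by (intro subset_sum_complete_divisors[of p]) auto
  with assms(1) show ?thesis
    unfolding f_practical_def subset_sum_complete_def S_f_def by (metis eq_commute)
qed

lemma not_f_practical_f_n_if_coprime:
  assumes "N > 1" "coprime N n"
  shows "\<not> f_practical (f_n n) N"
proof
  assume practical: "f_practical (f_n n) N"
  obtain q where q: "prime q" "q dvd N"
    using assms(1) prime_factor_nat[of N] by auto
  then have "\<not> q dvd n"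
    using assms(2) by (metis coprime_common_divisor not_prime_unit)
  then have "2 \<le> S_f (f_n n) N"
    unfolding S_f_def using assms(1) q f_n_1[of n] f_n_prime_power[of q 1 n]
    by (intro sum_divisors_ge_2) (auto simp: prime_gt_1_nat)
  then obtain D where D: "D \<subseteq> {d. d dvd N}" "sum (f_n n) D = 2"
    using practical unfolding f_practical_def by (metis one_le_numeral)
  have big: "f_n n d \<ge> 3" if d: "d \<in> D" "d \<noteq> 1" for d
  proof -
    obtain r where r: "prime r" "r dvd d"
      using d(2) prime_factor_nat by blast
    have "d dvd N" using d(1) D(1) by auto
    then have "r \<in> prime_factors d" "\<not> r dvd n"
      using r assms by (auto simp: in_prime_factors_iff dest: dvd_trans coprime_common_divisor
          intro: Nat.gr0I elim: not_prime_unit)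
    then show ?thesis using f_n_eq_1_or_ge_3 f_n_eq_1_iff by blast
  qed
  have "finite D" using D(1) assms(1) by (auto intro: finite_subset)
  show False
  proof (cases "D \<subseteq> {1}")
    case True
    then have "sum (f_n n) D \<le> sum (f_n n) {1}" by (intro sum_mono2) auto
    with D(2) f_n_1[of n] show False by simp
  next
    case False
    then obtain d where "d \<in> D" "d \<noteq> 1" by blast
    then have "f_n n d \<le> sum (f_n n) D" using \<open>finite D\<close> by (intro member_le_sum) auto
    with big[OF \<open>d \<in> D\<close> \<open>d \<noteq> 1\<close>] D(2) show False by simp
  qed
qed

lemma f_practical_f_n_iff: "f_practical (f_n n) N \<longleftrightarrow> N = 1 \<or> N > 0 \<and> \<not> coprime N n"
proof
  assume practical: "f_practical (f_n n) N"
  then have "N > 0" by (simp add: f_practical_def)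
  show "N = 1 \<or> N > 0 \<and> \<not> coprime N n"
  proof (cases "N = 1")
    case False
    with \<open>N > 0\<close> have "N > 1" by simp
    then show ?thesis using not_f_practical_f_n_if_coprime practical \<open>N > 0\<close> by blast
  qed simp
next
  assume "N = 1 \<or> N > 0 \<and> \<not> coprime N n"
  then show "f_practical (f_n n) N"
    using f_practical_1[of "f_n n", OF f_n_1] f_practical_f_n_if_not_coprime[of N n] by (elim disjE) auto
qed

lemma has_density_if_count_close:
  assumes "\<And>x. x > 0 \<Longrightarrow> \<bar>real (card (A \<inter> {1..x})) - \<delta> * real x\<bar> \<le> C"
  shows "has_density A \<delta>"
  unfolding has_density_def
proof (rule LIM_zero_cancel, rule tendsto_0_le[OF lim_1_over_n])
  show "\<forall>\<^sub>F x in sequentially.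
          norm (real (card (A \<inter> {1..x})) / real x - \<delta>) \<le> norm (1 / real x) * C"
  proof (rule eventually_sequentiallyI[of 1])
    fix x :: nat assume "1 \<le> x"
    then have "real (card (A \<inter> {1..x})) / real x - \<delta> = (real (card (A \<inter> {1..x})) - \<delta> * real x) / real x"
      by (simp add: field_simps)
    with assms[of x] \<open>1 \<le> x\<close> show "norm (real (card (A \<inter> {1..x})) / real x - \<delta>) \<le> norm (1 / real x) * C"
      by (simp add: abs_div divide_right_mono)
  qed
qed

lemma card_periodic_add_period:
  fixes A :: "nat set"
  assumes "\<And>k. k + n \<in> A \<longleftrightarrow> k \<in> A"
  shows "card (A \<inter> {1..x + n}) = card (A \<inter> {1..n}) + card (A \<inter> {1..x})"
proof -
  have "A \<inter> {1..x + n} = A \<inter> {1..n} \<union> (\<lambda>k. k + n) ` (A \<inter> {1..x})"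
  proof (intro equalityI subsetI)
    fix k assume k: "k \<in> A \<inter> {1..x + n}"
    show "k \<in> A \<inter> {1..n} \<union> (\<lambda>k. k + n) ` (A \<inter> {1..x})"
    proof (cases "k \<le> n")
      case False
      then have "k = (k - n) + n" "k - n \<in> A \<inter> {1..x}"
        using k assms[of "k - n"] by auto
      then show ?thesis by blast
    qed (use k in auto)
  qed (auto simp: assms)
  moreover have "card ((\<lambda>k. k + n) ` (A \<inter> {1..x})) = card (A \<inter> {1..x})"
    by (intro card_image) (simp add: inj_on_def)
  moreover have "A \<inter> {1..n} \<inter> (\<lambda>k. k + n) ` (A \<inter> {1..x}) = {}"
    by auto
  ultimately show ?thesis
    by (simp add: card_Un_disjoint)
qed

lemma card_periodic_mult_add:
  fixes A :: "nat set"
  assumes "\<And>k. k + n \<in> A \<longleftrightarrow> k \<in> A"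
  shows "card (A \<inter> {1..q * n + r}) = q * card (A \<inter> {1..n}) + card (A \<inter> {1..r})"
proof (induction q)
  case (Suc q)
  have "card (A \<inter> {1..Suc q * n + r}) = card (A \<inter> {1..(q * n + r) + n})"
    by (simp add: ac_simps)
  with Suc.IH show ?case
    using card_periodic_add_period[OF assms, of "q * n + r"] by simp
qed simp

lemma card_periodic_close:
  fixes A :: "nat set"
  assumes "n > 0" "\<And>k. k + n \<in> A \<longleftrightarrow> k \<in> A"
  shows "\<bar>real (card (A \<inter> {1..x})) - real (card (A \<inter> {1..n})) / real n * real x\<bar> \<le> real n"
proof -
  define c where "c = real (card (A \<inter> {1..n})) / real n"
  have c_bounds: "0 \<le> c" "c \<le> 1"
    using card_mono[of "{1..n}" "A \<inter> {1..n}"] assms(1) by (auto simp: c_def)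
  define q r where "q = x div n" and "r = x mod n"
  have x: "real x = real q * real n + real r"
    unfolding q_def r_def by (metis div_mult_mod_eq of_nat_add of_nat_mult)
  have "card (A \<inter> {1..x}) = q * card (A \<inter> {1..n}) + card (A \<inter> {1..r})"
    using card_periodic_mult_add[OF assms(2), of q r] by (simp add: q_def r_def)
  then have "real (card (A \<inter> {1..x})) - c * real x = real (card (A \<inter> {1..r})) - c * real r"
    using assms(1) by (simp add: x c_def field_simps)
  moreover have "real (card (A \<inter> {1..r})) \<le> real r"
    using card_mono[of "{1..r}" "A \<inter> {1..r}"] by simp
  moreover have "0 \<le> c * real r" "c * real r \<le> real r"
    using c_bounds by (simp_all add: mult_left_le_one_le)
  moreover have "r < n" using assms(1) by (simp add: r_def)
  ultimately show ?thesis
    unfolding c_def[symmetric] by (simp add: abs_le_iff)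
qed

lemma card_coprime_close:
  assumes "n > 0"
  shows "\<bar>real (card ({k. coprime k n} \<inter> {1..x})) - real (totient n) / real n * real x\<bar> \<le> real n"
proof -
  have periodic: "k + n \<in> {k. coprime k n} \<longleftrightarrow> k \<in> {k. coprime k n}" for k
    by (metis coprime_iff_gcd_eq_1 gcd_add1 mem_Collect_eq)
  have "{k. coprime k n} \<inter> {1..n} = totatives n"
    by (auto simp: totatives_def)
  then show ?thesis
    using card_periodic_close[OF assms periodic] by (simp add: totient_def)
qed

lemma card_f_practical_f_n:
  assumes "x > 0"
  shows "card ({N. f_practical (f_n n) N} \<inter> {1..x}) + card ({k. coprime k n} \<inter> {1..x}) = x + 1"
proof -
  have "{N. f_practical (f_n n) N} \<inter> {1..x} = insert 1 ({1..x} - {k. coprime k n})"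
    using assms by (auto simp: f_practical_f_n_iff)
  moreover have "card ({1..x} - {k. coprime k n}) + card ({k. coprime k n} \<inter> {1..x}) = x"
    using card_Diff_subset_Int[of "{1..x}" "{k. coprime k n}"] card_mono[of "{1..x}" "{1..x} \<inter> {k. coprime k n}"]
    by (simp add: Int_commute)
  ultimately show ?thesis by simp
qed

theorem lemma4p3:
  fixes n :: nat
  assumes "n > 0"
  shows "\<exists>f :: nat \<Rightarrow> nat.
           multiplicative_fun f \<and>
           (\<forall>x. x > 0 \<longrightarrow> f x > 0) \<and>
           (\<forall>p k. prime p \<and> k \<ge> 1 \<longrightarrow> f (p ^ (k - 1)) \<le> f (p ^ k)) \<and>
           has_density {N. f_practical f N} (1 - real (totient n) / real n)"
proof (intro exI conjI)
  show "multiplicative_fun (f_n n)"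
    unfolding multiplicative_fun_def using f_n_1 f_n_mult by blast
  show "\<forall>x. x > 0 \<longrightarrow> f_n n x > 0"
    by (simp add: f_n_def)
  show "\<forall>p k. prime p \<and> k \<ge> 1 \<longrightarrow> f_n n (p ^ (k - 1)) \<le> f_n n (p ^ k)"
    using f_n_prime_power_mono by blast
  show "has_density {N. f_practical (f_n n) N} (1 - real (totient n) / real n)"
  proof (rule has_density_if_count_close)
    fix x :: nat assume "x > 0"
    have "real (card ({N. f_practical (f_n n) N} \<inter> {1..x})) =
          real x + 1 - real (card ({k. coprime k n} \<inter> {1..x}))"
      using card_f_practical_f_n[OF \<open>x > 0\<close>, of n] by (simp flip: of_nat_add)
    with card_coprime_close[OF assms, of x]
    show "\<bar>real (card ({N. f_practical (f_n n) N} \<inter> {1..x})) -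
            (1 - real (totient n) / real n) * real x\<bar> \<le> real n + 1"
      by (simp add: abs_le_iff algebra_simps)
  qed
qed

end
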